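(* Let $r\ge2$ and let $V^\star\in\mathcal V_r$ be nonempty, with $V$ its linear span and $d=\dim V$. Then for every $\vec k\in V^\star\cap\mathbb Z^{r-1}$, $\alpha(\vec k)\le 2^{r-d-1}$.
   Context: For $\vec k=(k_1,\ldots,k_{r-1})\in\mathbb R^{r-1}$ set $k_0=k_r=0$ and, for $\mathbf S\subset\{0,\ldots,r-1\}$, $k_{\mathbf S}=\sum_{j\in\mathbf S}(k_{j+1}-k_j)$. $\mathcal M_r$ is the set of equivalence classes of subsets of $\{0,\ldots,r-1\}$ under $\mathbf S\sim\{0,\ldots,r-1\}\setminus\mathbf S$ (the condition $k_{\mathbf S}=0$ depends only on the class since $k_{\mathbf S^c}=-k_{\mathbf S}$). $\alpha(\vec k)=\#\{[\mathbf S]\in\mathcal M_r:k_{\mathbf S}=0\}$. For $S\subset\mathcal M_r$, $\ker(M_S)=\{\vec k\in\mathbb R^{r-1}:k_{\mathbf S}=0\ \forall[\mathbf S]\in S\}$ and $\ker(M_S)^\star=\ker(M_S)\setminus\bigcup_{S_1\subset\mathcal M_r,\,S_1\supsetneq S}\ker(M_{S_1})$; $\mathcal V_r=\{\ker(M_S)^\star:S\subset\mathcal M_r\}$, which partitions $\mathbb R^{r-1}$. *)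

theory Defs
  imports "HOL-Analysis.Analysis" "HOL-Library.Function_Algebras"
begin

text \<open>Vectors of R^(r-1) are encoded as functions k :: nat => real with k j = 0
  for j = 0 and j >= r (so k_0 = k_r = 0 as in the paper, and k_1..k_(r-1) free).\<close>

definition Rvec :: "nat \<Rightarrow> (nat \<Rightarrow> real) set" where
  "Rvec r = {k. \<forall>j. (j = 0 \<or> r \<le> j) \<longrightarrow> k j = 0}"

definition kS :: "(nat \<Rightarrow> real) \<Rightarrow> nat set \<Rightarrow> real" where
  "kS k S = (\<Sum>j\<in>S. k (Suc j) - k j)"

definition Mr :: "nat \<Rightarrow> nat set set set" where
  "Mr r = {{S, {0..<r} - S} | S. S \<subseteq> {0..<r}}"

definition alpha :: "nat \<Rightarrow> (nat \<Rightarrow> real) \<Rightarrow> nat" where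
  "alpha r k = card {C \<in> Mr r. \<forall>S\<in>C. kS k S = 0}"

definition kerM :: "nat \<Rightarrow> nat set set set \<Rightarrow> (nat \<Rightarrow> real) set" where
  "kerM r SS = {k \<in> Rvec r. \<forall>C\<in>SS. \<forall>S\<in>C. kS k S = 0}"

definition kerStar :: "nat \<Rightarrow> nat set set set \<Rightarrow> (nat \<Rightarrow> real) set" where
  "kerStar r SS = kerM r SS - (\<Union>{kerM r S1 | S1. S1 \<subseteq> Mr r \<and> SS \<subset> S1})"

definition Vr :: "nat \<Rightarrow> (nat \<Rightarrow> real) set set" where
  "Vr r = {kerStar r SS | SS. SS \<subseteq> Mr r}"

definition fscale :: "real \<Rightarrow> (nat \<Rightarrow> real) \<Rightarrow> (nat \<Rightarrow> real)" where
  "fscale c f = (\<lambda>i. c * f i)"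

end

theory Submission
  imports Defs
begin

(* Let A be the family of sets S \<subseteq> {0..<r} with k_S = 0. Maximality of the index set of the
   stratum V* containing k forces every class [S] with S \<in> A into that index set, so V lies in
   the space of vectors v with v_S = 0 for all S \<in> A. Choose a set J of coordinates that is
   minimal among those determining the span of the indicator vectors of A. Then S \<mapsto> S \<inter> J is
   injective on A, giving |A| \<le> 2^|J|; and minimality shows that the differences
   v_(j+1) - v_j with j \<notin> J determine v \<in> V, giving d + |J| \<le> r. Since A is closed under
   complements and each class counted by \<alpha>(k) consists of two members of A,
   2 \<alpha>(k) \<le> |A| \<le> 2^|J| \<le> 2^(r-d). *)

interpretation fv: vector_space fscale
  by unfold_locales (auto simp: fscale_def fun_eq_iff algebra_simps)

lemma sum_fun_apply:
  fixes f :: "'a \<Rightarrow> 'b \<Rightarrow> 'c::comm_monoid_add"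
  shows "(\<Sum>a\<in>A. f a) x = (\<Sum>a\<in>A. f a x)"
  by (induction A rule: infinite_finite_induct) auto

abbreviation indicator_span :: "nat set set \<Rightarrow> (nat \<Rightarrow> real) set" where
  "indicator_span A \<equiv> fv.span (indicator ` A)"

definition coords_determine :: "nat set set \<Rightarrow> nat set \<Rightarrow> bool" where
  "coords_determine A J \<longleftrightarrow> (\<forall>w \<in> indicator_span A. (\<forall>j\<in>J. w j = 0) \<longrightarrow> w = 0)"

lemma indicator_span_vanishes_outside:
  assumes "A \<subseteq> Pow I" "w \<in> indicator_span A" "i \<notin> I"
  shows "w i = 0"
proof -
  have "indicator_span A \<subseteq> {w. w i = 0}"
  proof (rule fv.span_minimal)
    show "(indicator :: nat set \<Rightarrow> nat \<Rightarrow> real) ` A \<subseteq> {w. w i = 0}"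
      using assms(1,3) by (fastforce simp: indicator_def)
  qed (auto simp: fv.subspace_def fscale_def)
  then show ?thesis using assms(2) by auto
qed

lemma indicator_span_annihilated:
  assumes "finite I" "A \<subseteq> Pow I" "w \<in> indicator_span A"
    and "\<forall>S\<in>A. sum d S = 0"
  shows "(\<Sum>i\<in>I. d i * w i) = 0"
proof -
  have "indicator_span A \<subseteq> {w. (\<Sum>i\<in>I. d i * w i) = 0}"
  proof (rule fv.span_minimal)
    show "(indicator :: nat set \<Rightarrow> nat \<Rightarrow> real) ` A \<subseteq> {w. (\<Sum>i\<in>I. d i * w i) = 0}"
    proof clarify
      fix S assume S: "S \<in> A"
      have "(\<Sum>i\<in>I. d i * indicator S i) = sum d (I \<inter> S)"
        using assms(1) by (simp add: sum.inter_restrict indicator_times_eq_if)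
      also have "I \<inter> S = S" using S assms(2) by auto
      finally show "(\<Sum>i\<in>I. d i * (indicator S i :: real)) = 0" using S assms(4) by simp
    qed
    show "fv.subspace {w. (\<Sum>i\<in>I. d i * w i) = 0}"
      by (auto simp: fv.subspace_def fscale_def algebra_simps sum.distrib
          sum_distrib_left[symmetric])
  qed
  then show ?thesis using assms(3) by auto
qed

lemma coords_determine_inj_on:
  assumes "coords_determine A J"
  shows "inj_on (\<lambda>S. S \<inter> J) A"
proof (rule inj_onI)
  fix S T assume ST: "S \<in> A" "T \<in> A" "S \<inter> J = T \<inter> J"
  let ?w = "indicator S - indicator T :: nat \<Rightarrow> real"
  have "?w \<in> indicator_span A"
    using ST by (intro fv.span_diff fv.span_base) auto
  moreover have "\<forall>j\<in>J. ?w j = 0"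
    using ST(3) by (auto simp: indicator_def)
  ultimately have "?w = 0" using assms unfolding coords_determine_def by blast
  then have "(indicator S :: nat \<Rightarrow> real) = indicator T" by simp
  then show "S = T" by (metis indicator_eq_1_iff set_eqI)
qed

lemma coords_determine_Diff:
  fixes d :: "nat \<Rightarrow> real"
  assumes "finite I" "A \<subseteq> Pow I" "J \<subseteq> I" "coords_determine A J"
    and "\<forall>i. i \<notin> J \<longrightarrow> d i = 0" "\<forall>S\<in>A. sum d S = 0" "d j \<noteq> 0"
  shows "coords_determine A (J - {j})"
  unfolding coords_determine_def
proof (intro ballI impI)
  fix w assume w: "w \<in> indicator_span A" "\<forall>i\<in>J - {j}. w i = 0"
  have j: "j \<in> J" using assms(5,7) by blast
  have "(\<Sum>i\<in>I. d i * w i) = (\<Sum>i\<in>{j}. d i * w i)"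
    using assms(1,3,5) j w(2) by (intro sum.mono_neutral_right) auto
  then have "d j * w j = 0"
    using indicator_span_annihilated[OF assms(1,2) w(1) assms(6)] by simp
  then have "\<forall>i\<in>J. w i = 0" using w(2) assms(7) by auto
  then show "w = 0" using assms(4) w(1) unfolding coords_determine_def by blast
qed

lemma coordinate_set_exists:
  assumes "finite I" "A \<subseteq> Pow I"
  obtains J where "J \<subseteq> I" "inj_on (\<lambda>S. S \<inter> J) A"
    "\<And>d :: nat \<Rightarrow> real. \<forall>j. j \<notin> J \<longrightarrow> d j = 0 \<Longrightarrow> \<forall>S\<in>A. sum d S = 0 \<Longrightarrow> d = 0"
proof -
  have "coords_determine A I"
    unfolding coords_determine_def
    using indicator_span_vanishes_outside[OF assms(2)] by (auto simp: fun_eq_iff)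
  then obtain J where J: "J \<subseteq> I" "coords_determine A J"
    and minimal: "\<And>J'. J' \<subseteq> I \<Longrightarrow> coords_determine A J' \<Longrightarrow> card J \<le> card J'"
    using ex_has_least_nat[where m = card and P = "\<lambda>J. J \<subseteq> I \<and> coords_determine A J"]
    by (metis order_refl)
  show ?thesis
  proof (rule that[OF J(1) coords_determine_inj_on[OF J(2)]])
    fix d :: "nat \<Rightarrow> real"
    assume d: "\<forall>j. j \<notin> J \<longrightarrow> d j = 0" "\<forall>S\<in>A. sum d S = 0"
    show "d = 0"
    proof (rule ccontr)
      assume "d \<noteq> 0"
      then obtain j where j: "d j \<noteq> 0" by (auto simp: fun_eq_iff)
      then have "j \<in> J" using d(1) by blast
      have "card J \<le> card (J - {j})"
        using J(1) by (intro minimal coords_determine_Diff[OF assms J(1) J(2) d j]) auto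
      moreover have "card (J - {j}) < card J"
        using finite_subset[OF J(1) assms(1)] \<open>j \<in> J\<close> by (rule card_Diff1_less)
      ultimately show False by simp
    qed
  qed
qed

lemma kS_full: "k \<in> Rvec r \<Longrightarrow> kS k {0..<r} = 0"
  unfolding kS_def Rvec_def atLeast0LessThan
  by (subst sum_lessThan_telescope) auto

lemma kS_compl:
  assumes "k \<in> Rvec r" "S \<subseteq> {0..<r}"
  shows "kS k ({0..<r} - S) = - kS k S"
  using kS_full[OF assms(1)] assms(2) unfolding kS_def
  by (simp add: sum_diff finite_subset)

lemma Rvec_eq_0_if_diffs_eq_0:
  assumes "v \<in> Rvec r" "\<And>j. j < r \<Longrightarrow> v (Suc j) = v j"
  shows "v = 0"
proof
  fix j
  have "v j = 0" if "j \<le> r" using that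
    by (induction j) (use assms in \<open>auto simp: Rvec_def\<close>)
  then show "v j = 0 j" using assms(1) by (cases "j \<le> r") (auto simp: Rvec_def)
qed

definition kerSets :: "nat \<Rightarrow> nat set set \<Rightarrow> (nat \<Rightarrow> real) set" where
  "kerSets r A = {v \<in> Rvec r. \<forall>S\<in>A. kS v S = 0}"

lemma subspace_kerSets: "fv.subspace (kerSets r A)"
  by (auto simp: fv.subspace_def kerSets_def Rvec_def kS_def fscale_def sum.distrib
      sum_distrib_left[symmetric] algebra_simps sum_subtractf)

definition diffs_outside :: "nat \<Rightarrow> nat set \<Rightarrow> (nat \<Rightarrow> real) \<Rightarrow> nat \<Rightarrow> real" where
  "diffs_outside r J v = (\<lambda>j. if j < r \<and> j \<notin> J then v (Suc j) - v j else 0)"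

lemma module_hom_diffs_outside: "module_hom fscale fscale (diffs_outside r J)"
  using fv.module_axioms
  by (auto simp: module_hom_def module_hom_axioms_def diffs_outside_def fscale_def fun_eq_iff
      algebra_simps)

lemma diffs_outside_in_span:
  "diffs_outside r J v \<in> fv.span ((\<lambda>j. indicator {j}) ` ({0..<r} - J))"
proof -
  let ?u = "diffs_outside r J v"
  have "?u = (\<Sum>j\<in>{0..<r} - J. fscale (?u j) (indicator {j}))"
  proof
    fix i
    have "(\<Sum>j\<in>{0..<r} - J. fscale (?u j) (indicator {j})) i
        = (\<Sum>j\<in>{0..<r} - J. if i = j then ?u j else 0)"
      by (subst sum_fun_apply, intro sum.cong refl) (simp add: fscale_def indicator_def)
    also have "\<dots> = (if i \<in> {0..<r} - J then ?u i else 0)"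
      by (rule sum.delta') simp
    also have "\<dots> = ?u i"
      by (simp add: diffs_outside_def)
    finally show "?u i = (\<Sum>j\<in>{0..<r} - J. fscale (?u j) (indicator {j})) i" by simp
  qed
  also have "\<dots> \<in> fv.span ((\<lambda>j. indicator {j}) ` ({0..<r} - J))"
    by (intro fv.span_sum fv.span_scale fv.span_base) auto
  finally show ?thesis .
qed

lemma inj_on_diffs_outside:
  assumes "A \<subseteq> Pow {0..<r}"
    and "\<And>d :: nat \<Rightarrow> real. \<forall>j. j \<notin> J \<longrightarrow> d j = 0 \<Longrightarrow> \<forall>S\<in>A. sum d S = 0 \<Longrightarrow> d = 0"
  shows "inj_on (diffs_outside r J) (kerSets r A)"
  unfolding module_hom.inj_on_iff_eq_0[OF module_hom_diffs_outside subspace_kerSets]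
proof (intro ballI impI)
  fix z assume z: "z \<in> kerSets r A" "diffs_outside r J z = 0"
  define d where "d = (\<lambda>j. if j < r then z (Suc j) - z j else 0)"
  have "d = 0"
  proof (rule assms(2))
    show "\<forall>j. j \<notin> J \<longrightarrow> d j = 0"
      using z(2) by (auto simp: d_def diffs_outside_def fun_eq_iff split: if_splits)
    have "sum d S = kS z S" if "S \<in> A" for S
    proof -
      have "S \<subseteq> {0..<r}" using that assms(1) by blast
      then show ?thesis unfolding kS_def d_def by (intro sum.cong) auto
    qed
    then show "\<forall>S\<in>A. sum d S = 0" using z(1) by (auto simp: kerSets_def)
  qed
  show "z = 0"
  proof (rule Rvec_eq_0_if_diffs_eq_0)
    show "z \<in> Rvec r" using z(1) by (simp add: kerSets_def)
    fix j assume "j < r"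
    moreover have "d j = 0" using \<open>d = 0\<close> by simp
    ultimately show "z (Suc j) = z j" by (simp add: d_def)
  qed
qed

lemma dim_add_card_le:
  assumes "A \<subseteq> Pow {0..<r}" "J \<subseteq> {0..<r}"
    and "\<And>d :: nat \<Rightarrow> real. \<forall>j. j \<notin> J \<longrightarrow> d j = 0 \<Longrightarrow> \<forall>S\<in>A. sum d S = 0 \<Longrightarrow> d = 0"
    and "fv.span V \<subseteq> kerSets r A"
  shows "fv.dim (fv.span V) + card J \<le> r"
proof -
  let ?f = "diffs_outside r J"
  obtain B where B: "B \<subseteq> fv.span V" "fv.independent B" "fv.span V \<subseteq> fv.span B"
    "card B = fv.dim (fv.span V)"
    by (rule fv.basis_exists)
  have "fv.span B \<subseteq> kerSets r A"
    using B(1) assms(4) fv.span_minimal[OF _ subspace_kerSets] by blast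
  then have inj: "inj_on ?f (fv.span B)"
    using inj_on_diffs_outside[OF assms(1,3)] inj_on_subset by blast
  have "card B = card (?f ` B)"
    using inj fv.span_superset inj_on_subset card_image by metis
  also have "\<dots> \<le> card ((\<lambda>j. indicator {j}) ` ({0..<r} - J) :: (nat \<Rightarrow> real) set)"
    using module_hom.independent_injective_image[OF module_hom_diffs_outside B(2) inj]
    by (intro conjunct2[OF fv.independent_span_bound]) (auto intro: diffs_outside_in_span)
  also have "\<dots> \<le> card ({0..<r} - J)" by (rule card_image_le) simp
  also have "\<dots> = r - card J" using assms(2) by (simp add: card_Diff_subset finite_subset)
  finally show ?thesis using B(4) card_mono[OF _ assms(2)] by simp
qed

lemma card_le_power_if_inj_on_Int:
  assumes "finite J" "inj_on (\<lambda>S. S \<inter> J) A"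
  shows "card A \<le> 2 ^ card J"
proof -
  have "card A = card ((\<lambda>S. S \<inter> J) ` A)" using assms(2) by (simp add: card_image)
  also have "\<dots> \<le> card (Pow J)" using assms(1) by (intro card_mono) auto
  finally show ?thesis using assms(1) by (simp add: card_Pow)
qed

lemma kerStar_vanishing_class_mem:
  assumes "SS \<subseteq> Mr r" "k \<in> kerStar r SS" "S \<subseteq> {0..<r}" "kS k S = 0"
  shows "{S, {0..<r} - S} \<in> SS"
proof (rule ccontr)
  let ?C = "{S, {0..<r} - S}"
  assume "?C \<notin> SS"
  moreover have "?C \<in> Mr r" using assms(3) unfolding Mr_def by blast
  ultimately have "insert ?C SS \<subseteq> Mr r \<and> SS \<subset> insert ?C SS"
    using assms(1) by blast
  moreover have "k \<in> kerM r (insert ?C SS)"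
  proof -
    have "k \<in> kerM r SS" using assms(2) by (simp add: kerStar_def)
    moreover from this have "kS k ({0..<r} - S) = 0"
      using kS_compl[of k r S] assms(3,4) by (simp add: kerM_def)
    ultimately show ?thesis using assms(4) by (simp add: kerM_def)
  qed
  ultimately have "k \<in> \<Union>{kerM r S1 | S1. S1 \<subseteq> Mr r \<and> SS \<subset> S1}" by blast
  then show False using assms(2) by (simp add: kerStar_def)
qed

lemma kerStar_subset_kerSets:
  assumes "SS \<subseteq> Mr r" "k \<in> kerStar r SS"
  shows "kerStar r SS \<subseteq> kerSets r {S. S \<subseteq> {0..<r} \<and> kS k S = 0}"
proof
  fix v assume "v \<in> kerStar r SS"
  then have v: "v \<in> Rvec r" "\<And>C S. C \<in> SS \<Longrightarrow> S \<in> C \<Longrightarrow> kS v S = 0"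
    by (auto simp: kerStar_def kerM_def)
  have "kS v S = 0" if "S \<subseteq> {0..<r}" "kS k S = 0" for S
    using v(2)[OF kerStar_vanishing_class_mem[OF assms that]] by simp
  with v(1) show "v \<in> kerSets r {S. S \<subseteq> {0..<r} \<and> kS k S = 0}"
    by (simp add: kerSets_def)
qed

(* Each vanishing class has exactly one member avoiding 0, and its complement also vanishes. *)
lemma two_alpha_le_card:
  assumes "k \<in> Rvec r" "0 < r"
  shows "2 * alpha r k \<le> card {S. S \<subseteq> {0..<r} \<and> kS k S = 0}"
proof -
  define A where "A = {S. S \<subseteq> {0..<r} \<and> kS k S = 0}"
  define A0 where "A0 = {S \<in> A. 0 \<notin> S}"
  define cp where "cp = (\<lambda>S. {0..<r} - S)"
  have finite: "finite A" "finite A0" by (auto simp: A_def A0_def)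
  have "alpha r k \<le> card ((\<lambda>S. {S, cp S}) ` A0)"
  proof (unfold alpha_def, intro card_mono finite_imageI finite(2) subsetI)
    fix C assume "C \<in> {C \<in> Mr r. \<forall>S\<in>C. kS k S = 0}"
    then obtain S where S: "S \<subseteq> {0..<r}" "C = {S, cp S}" "\<forall>S\<in>C. kS k S = 0"
      unfolding Mr_def cp_def by blast
    then have "S \<in> A" "cp S \<in> A" by (simp_all add: A_def cp_def)
    show "C \<in> (\<lambda>S. {S, cp S}) ` A0"
    proof (cases "0 \<in> S")
      case True
      have "cp S \<in> A0" using True \<open>cp S \<in> A\<close> by (simp add: A0_def cp_def)
      moreover have "C = {cp S, cp (cp S)}" using S(1,2) by (auto simp: cp_def)
      ultimately show ?thesis by (rule rev_image_eqI)
    next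
      case False
      with S(2) \<open>S \<in> A\<close> show ?thesis
        by (intro rev_image_eqI[of S]) (simp_all add: A0_def)
    qed
  qed
  also have "\<dots> \<le> card A0" by (rule card_image_le[OF finite(2)])
  moreover have "card (cp ` A0) = card A0"
    by (rule card_image) (unfold inj_on_def A0_def A_def cp_def, blast)
  ultimately have "2 * alpha r k \<le> card A0 + card (cp ` A0)" by simp
  also have "\<dots> = card (A0 \<union> cp ` A0)"
    using finite assms(2) by (intro card_Un_disjoint[symmetric]) (auto simp: A0_def cp_def)
  also have "\<dots> \<le> card A"
  proof (intro card_mono finite)
    have "cp S \<in> A" if "S \<in> A" for S
      using that kS_compl[OF assms(1), of S] by (simp add: A_def cp_def)
    then show "A0 \<union> cp ` A0 \<subseteq> A" by (auto simp: A0_def)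
  qed
  finally show ?thesis by (simp add: A_def)
qed

theorem mainTheorem8:
  fixes r :: nat and Vs :: "(nat \<Rightarrow> real) set" and k :: "nat \<Rightarrow> real"
  assumes "r \<ge> 2"
    and "Vs \<in> Vr r" and "Vs \<noteq> {}"
    and "k \<in> Vs" and "\<forall>i. k i \<in> \<int>"
  shows "alpha r k \<le> 2 ^ (r - vector_space.dim fscale (module.span fscale Vs) - 1)"
proof -
  obtain SS where SS: "SS \<subseteq> Mr r" "Vs = kerStar r SS" using assms(2) by (auto simp: Vr_def)
  have k: "k \<in> Rvec r" using assms(4) SS(2) by (auto simp: kerStar_def kerM_def)
  define A where "A = {S. S \<subseteq> {0..<r} \<and> kS k S = 0}"
  have A: "A \<subseteq> Pow {0..<r}" by (auto simp: A_def)
  obtain J where J: "J \<subseteq> {0..<r}" "inj_on (\<lambda>S. S \<inter> J) A"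
    "\<And>d :: nat \<Rightarrow> real. \<forall>j. j \<notin> J \<longrightarrow> d j = 0 \<Longrightarrow> \<forall>S\<in>A. sum d S = 0 \<Longrightarrow> d = 0"
    using coordinate_set_exists[OF _ A] by blast
  have "fv.span Vs \<subseteq> kerSets r A"
    using kerStar_subset_kerSets[OF SS(1)] assms(4) SS(2)
    by (intro fv.span_minimal[OF _ subspace_kerSets]) (auto simp: A_def)
  with A J(1,3) have dim: "fv.dim (fv.span Vs) + card J \<le> r" by (rule dim_add_card_le)
  have "card A \<le> 2 ^ card J"
    using J(1,2) by (intro card_le_power_if_inj_on_Int) (auto intro: finite_subset)
  then have "2 * alpha r k \<le> 2 ^ card J"
    using two_alpha_le_card[OF k] assms(1) by (simp add: A_def)
  then have "alpha r k \<le> 2 ^ (card J - 1)" by (cases "card J") auto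
  also have "\<dots> \<le> 2 ^ (r - fv.dim (fv.span Vs) - 1)" using dim by (intro power_increasing) auto
  finally show ?thesis .
qed

end
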